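(* Let $Q$ be a right Leibniz algebra over $\mathbb{F}$, $L$ a subalgebra of $Q$, and $q\in Q$. Then $(L:q)$ is an ideal of $L$. Moreover, it is maximal among the ideals $I$ of $L$ such that $[I,q]\subseteq L$ and $[q,I]\subseteq L$, in the sense that every ideal $I$ of $L$ with $[I,q]\subseteq L$ and $[q,I]\subseteq L$ is contained in $(L:q)$.
   Context: A right Leibniz algebra satisfies $[x,[y,z]]=[[x,y],z]-[[x,z],y]$. Ideals of $L$: subspaces $I$ with $[I,L]\subseteq I$, $[L,I]\subseteq I$. For $x\in L$ let $R_x(u)=[u,x]$, $L_x(u)=[x,u]$ as operators on $Q$, and $\mathscr{A}(L)$ the associative algebra generated by $\{R_x,L_y:x,y\in L\}$. ${}_L(q)=\mathbb{F}q+\{\sum_{i=1}^n\xi_i(q):\xi_i\in\mathscr{A}(L),n\in\mathbb{N}\}$, and $(L:q)=\{x\in L:[x,{}_L(q)]\subseteq L,\ [{}_L(q),x]\subseteq L\}$. *)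

theory Defs
  imports Complex_Main
begin

definition right_leibniz_algebra ::
  "('k::field \<Rightarrow> 'v::ab_group_add \<Rightarrow> 'v) \<Rightarrow> ('v \<Rightarrow> 'v \<Rightarrow> 'v) \<Rightarrow> bool" where
  "right_leibniz_algebra scale br \<longleftrightarrow>
     vector_space scale \<and>
     (\<forall>x y z. br (x + y) z = br x z + br y z) \<and>
     (\<forall>x y z. br x (y + z) = br x y + br x z) \<and>
     (\<forall>c x y. br (scale c x) y = scale c (br x y)) \<and>
     (\<forall>c x y. br x (scale c y) = scale c (br x y)) \<and>
     (\<forall>x y z. br x (br y z) = br (br x y) z - br (br x z) y)"

definition subalgebra ::
  "('k::field \<Rightarrow> 'v::ab_group_add \<Rightarrow> 'v) \<Rightarrow> ('v \<Rightarrow> 'v \<Rightarrow> 'v) \<Rightarrow> 'v set \<Rightarrow> bool" where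
  "subalgebra scale br L \<longleftrightarrow> module.subspace scale L \<and> (\<forall>x\<in>L. \<forall>y\<in>L. br x y \<in> L)"

definition leibniz_ideal ::
  "('k::field \<Rightarrow> 'v::ab_group_add \<Rightarrow> 'v) \<Rightarrow> ('v \<Rightarrow> 'v \<Rightarrow> 'v) \<Rightarrow> 'v set \<Rightarrow> 'v set \<Rightarrow> bool" where
  "leibniz_ideal scale br L I \<longleftrightarrow> module.subspace scale I \<and> I \<subseteq> L \<and>
     (\<forall>x\<in>I. \<forall>y\<in>L. br x y \<in> I \<and> br y x \<in> I)"

inductive_set opalg ::
  "('k::field \<Rightarrow> 'v::ab_group_add \<Rightarrow> 'v) \<Rightarrow> ('v \<Rightarrow> 'v \<Rightarrow> 'v) \<Rightarrow> 'v set \<Rightarrow> ('v \<Rightarrow> 'v) set"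
  for scale br L where
  right_mult: "x \<in> L \<Longrightarrow> (\<lambda>u. br u x) \<in> opalg scale br L"
| left_mult: "y \<in> L \<Longrightarrow> (\<lambda>u. br y u) \<in> opalg scale br L"
| comp: "f \<in> opalg scale br L \<Longrightarrow> g \<in> opalg scale br L \<Longrightarrow> f \<circ> g \<in> opalg scale br L"
| add: "f \<in> opalg scale br L \<Longrightarrow> g \<in> opalg scale br L \<Longrightarrow> (\<lambda>u. f u + g u) \<in> opalg scale br L"
| smult: "f \<in> opalg scale br L \<Longrightarrow> (\<lambda>u. scale c (f u)) \<in> opalg scale br L"

definition leibniz_gen_set ::
  "('k::field \<Rightarrow> 'v::ab_group_add \<Rightarrow> 'v) \<Rightarrow> ('v \<Rightarrow> 'v \<Rightarrow> 'v) \<Rightarrow> 'v set \<Rightarrow> 'v \<Rightarrow> 'v set" where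
  "leibniz_gen_set scale br L q = {scale c q + (\<Sum>i<n. \<xi> i q) | c (n::nat) \<xi>. \<forall>i<n. \<xi> i \<in> opalg scale br L}"

definition colon ::
  "('k::field \<Rightarrow> 'v::ab_group_add \<Rightarrow> 'v) \<Rightarrow> ('v \<Rightarrow> 'v \<Rightarrow> 'v) \<Rightarrow> 'v set \<Rightarrow> 'v \<Rightarrow> 'v set" where
  "colon scale br L q = {x \<in> L. \<forall>z \<in> leibniz_gen_set scale br L q. br x z \<in> L \<and> br z x \<in> L}"

end

theory Submission
  imports Defs
begin

text \<open>Write \<open>T(S)\<close> for the set of \<open>w\<close> with \<open>[S,w] \<subseteq> L\<close> and \<open>[w,S] \<subseteq> L\<close>, so that
  \<open>(L:q) = L \<inter> T(\<^sub>L(q))\<close>. The Leibniz identity shows that \<open>T(S)\<close> is stable under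
  bracketing with \<open>L\<close> whenever \<open>S\<close> is. Applied to \<open>S = \<^sub>L(q)\<close>, which is stable by
  construction, this makes \<open>(L:q)\<close> an ideal. Applied to an ideal \<open>I\<close> with \<open>q \<in> T(I)\<close>,
  it makes \<open>T(I)\<close> a subspace containing \<open>q\<close> and stable under every operator of
  \<open>\<A>(L)\<close>, hence \<open>\<^sub>L(q) \<subseteq> T(I)\<close>, which by symmetry of \<open>T\<close> is \<open>I \<subseteq> (L:q)\<close>.\<close>

definition transporter :: "('v \<Rightarrow> 'v \<Rightarrow> 'v) \<Rightarrow> 'v set \<Rightarrow> 'v set \<Rightarrow> 'v set" where
  "transporter br L S = {w. \<forall>x\<in>S. br x w \<in> L \<and> br w x \<in> L}"

definition bracket_stable :: "('v \<Rightarrow> 'v \<Rightarrow> 'v) \<Rightarrow> 'v set \<Rightarrow> 'v set \<Rightarrow> bool" where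
  "bracket_stable br L S \<longleftrightarrow> (\<forall>w\<in>S. \<forall>y\<in>L. br w y \<in> S \<and> br y w \<in> S)"

lemma subset_transporter_iff: "S \<subseteq> transporter br L T \<longleftrightarrow> T \<subseteq> transporter br L S"
  unfolding transporter_def by blast

lemma colon_eq_transporter:
  "colon scale br L q = L \<inter> transporter br L (leibniz_gen_set scale br L q)"
  unfolding colon_def transporter_def by blast

lemma leibniz_ideal_iff:
  "leibniz_ideal scale br L I \<longleftrightarrow> module.subspace scale I \<and> I \<subseteq> L \<and> bracket_stable br L I"
  unfolding leibniz_ideal_def bracket_stable_def by blast

locale right_leibniz =
  fixes scale :: "'k::field \<Rightarrow> 'v::ab_group_add \<Rightarrow> 'v"
    and br :: "'v \<Rightarrow> 'v \<Rightarrow> 'v"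
  assumes right_leibniz_algebra: "right_leibniz_algebra scale br"
begin

sublocale module scale
  using right_leibniz_algebra module_iff_vector_space
  unfolding right_leibniz_algebra_def by blast

lemma br_add_left: "br (x + y) z = br x z + br y z"
  and br_add_right: "br x (y + z) = br x y + br x z"
  and br_scale_left: "br (scale c x) y = scale c (br x y)"
  and br_scale_right: "br x (scale c y) = scale c (br x y)"
  and br_br_right: "br x (br y z) = br (br x y) z - br (br x z) y"
  using right_leibniz_algebra unfolding right_leibniz_algebra_def by blast+

lemma br_br_left: "br (br x y) z = br x (br y z) + br (br x z) y"
  using br_br_right[of x y z] by (simp add: algebra_simps)

lemma br_zero_left [simp]: "br 0 z = 0"
  using br_add_left[of 0 0 z] by simp

lemma br_zero_right [simp]: "br z 0 = 0"
  using br_add_right[of z 0 0] by simp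

lemma subspace_transporter:
  assumes "subspace L"
  shows "subspace (transporter br L S)"
  unfolding subspace_def transporter_def
  using subspace_0[OF assms] subspace_add[OF assms] subspace_scale[OF assms]
  by (simp add: br_add_left br_add_right br_scale_left br_scale_right)

lemma opalg_preserves:
  assumes "f \<in> opalg scale br L" "subspace S" "bracket_stable br L S" "w \<in> S"
  shows "f w \<in> S"
  using assms
proof (induction arbitrary: w)
  case (add f g)
  then show ?case by (simp add: subspace_add)
next
  case (smult f c)
  then show ?case by (simp add: subspace_scale)
qed (auto simp: bracket_stable_def)

lemma leibniz_gen_set_least:
  assumes "subspace S" "bracket_stable br L S" "q \<in> S"
  shows "leibniz_gen_set scale br L q \<subseteq> S"
proof
  fix z assume "z \<in> leibniz_gen_set scale br L q"
  then obtain c and n :: nat and \<xi> where z: "z = scale c q + (\<Sum>i<n. \<xi> i q)"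
    and \<xi>: "\<forall>i<n. \<xi> i \<in> opalg scale br L"
    unfolding leibniz_gen_set_def by blast
  have "(\<Sum>i<n. \<xi> i q) \<in> S"
    using \<xi> opalg_preserves[OF _ assms] by (intro subspace_sum[OF assms(1)]) auto
  then show "z \<in> S"
    unfolding z using assms by (intro subspace_add subspace_scale)
qed

lemma opalg_module_hom: "f \<in> opalg scale br L \<Longrightarrow> module_hom scale scale f"
proof (induction rule: opalg.induct)
  case (comp f g)
  then show ?case by (blast intro: module_hom_compose)
qed (auto simp: module_hom_iff module_axioms br_add_left br_add_right br_scale_left
    br_scale_right scale_right_distrib mult.commute)

text \<open>By linearity, \<open>f (c q + \<Sum>i<n. \<xi> i q) = 0 q + \<Sum>i<n+1. \<eta> i q\<close> where
  \<open>\<eta> i = f \<circ> \<xi> i\<close> for \<open>i < n\<close> and \<open>\<eta> n = c f\<close>.\<close>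
lemma opalg_image_leibniz_gen_set:
  assumes f: "f \<in> opalg scale br L" and z: "z \<in> leibniz_gen_set scale br L q"
  shows "f z \<in> leibniz_gen_set scale br L q"
proof -
  obtain c and n :: nat and \<xi> where z: "z = scale c q + (\<Sum>i<n. \<xi> i q)"
    and \<xi>: "\<forall>i<n. \<xi> i \<in> opalg scale br L"
    using z unfolding leibniz_gen_set_def by blast
  interpret f: module_hom scale scale f
    using f by (rule opalg_module_hom)
  define \<eta> where "\<eta> i = (if i < n then f \<circ> \<xi> i else (\<lambda>u. scale c (f u)))" for i
  have "\<forall>i<Suc n. \<eta> i \<in> opalg scale br L"
    using \<xi> f by (auto simp: \<eta>_def less_Suc_eq intro: opalg.comp opalg.smult)
  moreover have "f z = scale 0 q + (\<Sum>i<Suc n. \<eta> i q)"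
    by (simp add: z f.add f.scale f.sum \<eta>_def add.commute)
  ultimately show ?thesis
    unfolding leibniz_gen_set_def by blast
qed

lemma bracket_stable_leibniz_gen_set: "bracket_stable br L (leibniz_gen_set scale br L q)"
  unfolding bracket_stable_def
  using opalg_image_leibniz_gen_set[OF opalg.right_mult] opalg_image_leibniz_gen_set[OF opalg.left_mult]
  by blast

end

locale right_leibniz_subalgebra = right_leibniz +
  fixes L
  assumes subalgebra: "subalgebra scale br L"
begin

lemma subspace_L: "subspace L"
  and br_closed: "x \<in> L \<Longrightarrow> y \<in> L \<Longrightarrow> br x y \<in> L"
  using subalgebra unfolding subalgebra_def by blast+

lemma transporter_bracket_stable:
  assumes S: "bracket_stable br L S"
  shows "bracket_stable br L (transporter br L S)"
  unfolding bracket_stable_def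
proof (intro ballI conjI)
  fix w y assume w: "w \<in> transporter br L S" and y: "y \<in> L"
  have "br x (br w y) \<in> L \<and> br (br w y) x \<in> L \<and> br x (br y w) \<in> L \<and> br (br y w) x \<in> L"
    if x: "x \<in> S" for x
  proof -
    have "br x y \<in> S" "br y x \<in> S"
      using S x y unfolding bracket_stable_def by blast+
    then have in_L: "br x w \<in> L" "br w x \<in> L" "br (br x y) w \<in> L"
      "br w (br y x) \<in> L" "br (br y x) w \<in> L" "br (br x w) y \<in> L"
      "br (br w x) y \<in> L" "br y (br w x) \<in> L"
      using w x y br_closed unfolding transporter_def by blast+
    have "br x (br w y) = br (br x w) y - br (br x y) w"
      "br (br w y) x = br w (br y x) + br (br w x) y"
      "br x (br y w) = br (br x y) w - br (br x w) y"
      "br (br y w) x = br y (br w x) + br (br y x) w"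
      by (rule br_br_right br_br_left)+
    then show ?thesis
      using in_L subspace_add[OF subspace_L] subspace_diff[OF subspace_L] by simp
  qed
  then show "br w y \<in> transporter br L S" "br y w \<in> transporter br L S"
    unfolding transporter_def by blast+
qed

lemma leibniz_ideal_colon: "leibniz_ideal scale br L (colon scale br L q)"
  unfolding leibniz_ideal_iff colon_eq_transporter
proof (intro conjI)
  let ?T = "transporter br L (leibniz_gen_set scale br L q)"
  show "subspace (L \<inter> ?T)"
    by (intro subspace_inter subspace_L subspace_transporter)
  have "bracket_stable br L ?T"
    by (intro transporter_bracket_stable bracket_stable_leibniz_gen_set)
  then show "bracket_stable br L (L \<inter> ?T)"
    unfolding bracket_stable_def using br_closed by blast
qed blast

lemma leibniz_ideal_subset_colon:
  assumes I: "leibniz_ideal scale br L I" and q: "q \<in> transporter br L I"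
  shows "I \<subseteq> colon scale br L q"
proof -
  have "leibniz_gen_set scale br L q \<subseteq> transporter br L I"
    using I q
    by (intro leibniz_gen_set_least subspace_transporter subspace_L transporter_bracket_stable)
      (simp_all add: leibniz_ideal_iff)
  then show ?thesis
    using I unfolding colon_eq_transporter leibniz_ideal_iff subset_transporter_iff by blast
qed

end

theorem proposition3p1:
  fixes scale :: "'k::field \<Rightarrow> 'v::ab_group_add \<Rightarrow> 'v"
    and br :: "'v \<Rightarrow> 'v \<Rightarrow> 'v"
    and L :: "'v set" and q :: 'v
  assumes "right_leibniz_algebra scale br"
    and "subalgebra scale br L"
  shows "leibniz_ideal scale br L (colon scale br L q) \<and>
         (\<forall>I. leibniz_ideal scale br L I \<and> (\<forall>x\<in>I. br x q \<in> L \<and> br q x \<in> L)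
              \<longrightarrow> I \<subseteq> colon scale br L q)"
proof -
  interpret right_leibniz_subalgebra scale br L
    using assms by unfold_locales
  show ?thesis
    using leibniz_ideal_colon leibniz_ideal_subset_colon
    unfolding transporter_def by blast
qed

end
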